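(* Let $(\mathcal I,T)$ be a system of class $\mathcal{DRIS}(\gamma)$ for some $\gamma>0$. Then its block system belongs to the Good Class. Consequently $\mathcal{DRIS}=\bigcup_{\gamma>0}\mathcal{DRIS}(\gamma)\subset\mathcal{DRBGC}$.
   Context: Let $\mathcal I=[0,1]$. A binary dynamical system is given by $c\in]0,1[$ and two $C^2$ bijections, $a:[0,1]\to[0,c]$ and $b:[0,1]\to[c,1]$ (the inverse branches). The map $T$ equals $a^{-1}$ on $]0,c[$ and $b^{-1}$ on $]c,1[$. Class $\mathcal{DR}$: $a$ is increasing, $b$ is decreasing, $a(0)=0$, $a(1)=c$, $b(0)=1$, $b(1)=c$, $a'>0$ and $b'<0$ on $[0,1]$, and $a'(x)<1$, $b'(x)>-1$ for $x\in]0,1]$. Class $\mathcal{DRI}$: class $\mathcal{DR}$ with moreover $a'(0)=1$. Let $q(n)=a^n(1)$. Block system: for $m\ge1$, $\mathcal J_m=]q(m),q(m-1)[$ and $g_m=a^{m-1}\circ b$. The block map $\widehat T$ equals $g_m^{-1}$ on $\mathcal J_m$. Let $\mathcal G^n$ be the set of compositions $g_{m_1}\circ\cdots\circ g_{m_n}$. The block system is in the Good Class if: - (a) the Dirichlet series $\sum_{m\ge1}|\mathcal J_m|^s$ has abscissa of convergence $<1$; - (b) $\limsup_n\eta_n<1$, where $\eta_n=\sup\{|g'(x)|:g\in\mathcal G^n,x\in\mathcal I\}$; - (c) there is $L\ge1$ with $L^{-1}\le|g_m'(x)/g_m'(y)|\le L$ for all $m\ge1$ and $x,y\in\mathcal I$.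 $\mathcal{DRBGC}$ is the class of $\mathcal{DRI}$ systems whose block system is in the Good Class. $\mathcal{SV}_0^*$ denotes the set of positive functions $V\in C^1(]0,1])$ such that: - $V$ is slowly varying at $0$, i.e. $V(tx)/V(x)\to1$ as $x\to0^+$ for every $t>0$; - $xV'(x)/V(x)\to0$ as $x\to0^+$. For $\gamma>0$, $\mathcal{DRIS}(\gamma)$ is the class of $\mathcal{DRI}$ systems such that $a(x)=x-u(x)$, where $u\in C^2([0,1])$, $u(0)=u'(0)=0$, $u'(x)\in[0,1]$, and $u'(x)=x^\gamma V(x)$ on $]0,1]$ for some $V\in\mathcal{SV}_0^*$. *)

theory Defs
  imports "HOL-Analysis.Analysis" "HOL-Library.Liminf_Limsup"
begin

definition D01 :: "(real \<Rightarrow> real) \<Rightarrow> real \<Rightarrow> real" where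
  "D01 f x = vector_derivative f (at x within {0..1})"

definition Dh :: "(real \<Rightarrow> real) \<Rightarrow> real \<Rightarrow> real" where
  "Dh f x = vector_derivative f (at x within {0<..1})"

definition C2_01 :: "(real \<Rightarrow> real) \<Rightarrow> bool" where
  "C2_01 f \<longleftrightarrow>
     (\<forall>x\<in>{0..1}. f differentiable (at x within {0..1})) \<and>
     (\<forall>x\<in>{0..1}. D01 f differentiable (at x within {0..1})) \<and>
     continuous_on {0..1} (D01 (D01 f))"

definition C1_half :: "(real \<Rightarrow> real) \<Rightarrow> bool" where
  "C1_half f \<longleftrightarrow>
     (\<forall>x\<in>{0<..1}. f differentiable (at x within {0<..1})) \<and>
     continuous_on {0<..1} (Dh f)"

(* binary dynamical system given by c and inverse branches a, b *)
definition binary_system :: "real \<Rightarrow> (real \<Rightarrow> real) \<Rightarrow> (real \<Rightarrow> real) \<Rightarrow> bool" where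
  "binary_system c a b \<longleftrightarrow> 0 < c \<and> c < 1 \<and>
     C2_01 a \<and> C2_01 b \<and> bij_betw a {0..1} {0..c} \<and> bij_betw b {0..1} {c..1}"

definition DR :: "real \<Rightarrow> (real \<Rightarrow> real) \<Rightarrow> (real \<Rightarrow> real) \<Rightarrow> bool" where
  "DR c a b \<longleftrightarrow> binary_system c a b \<and>
     strict_mono_on {0..1} a \<and> strict_antimono_on {0..1} b \<and>
     a 0 = 0 \<and> a 1 = c \<and> b 0 = 1 \<and> b 1 = c \<and>
     (\<forall>x\<in>{0..1}. D01 a x > 0 \<and> D01 b x < 0) \<and>
     (\<forall>x\<in>{0<..1}. D01 a x < 1 \<and> D01 b x > -1)"

definition DRI :: "real \<Rightarrow> (real \<Rightarrow> real) \<Rightarrow> (real \<Rightarrow> real) \<Rightarrow> bool" where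
  "DRI c a b \<longleftrightarrow> DR c a b \<and> D01 a 0 = 1"

definition qpt :: "(real \<Rightarrow> real) \<Rightarrow> nat \<Rightarrow> real" where
  "qpt a n = (a ^^ n) 1"

(* length of J_m = ]q(m), q(m-1)[ , for m \<ge> 1 *)
definition Jlen :: "(real \<Rightarrow> real) \<Rightarrow> nat \<Rightarrow> real" where
  "Jlen a m = qpt a (m - 1) - qpt a m"

definition gblk :: "(real \<Rightarrow> real) \<Rightarrow> (real \<Rightarrow> real) \<Rightarrow> nat \<Rightarrow> real \<Rightarrow> real" where
  "gblk a b m = (a ^^ (m - 1)) \<circ> b"

definition gcomp :: "(real \<Rightarrow> real) \<Rightarrow> (real \<Rightarrow> real) \<Rightarrow> nat list \<Rightarrow> real \<Rightarrow> real" where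
  "gcomp a b ms = foldr (\<lambda>m h. gblk a b m \<circ> h) ms id"

(* abscissa of convergence of sum_{m\<ge>1} |J_m|^s (terms positive, so real s suffice) *)
definition abscissa_J :: "(real \<Rightarrow> real) \<Rightarrow> ereal" where
  "abscissa_J a = Inf {ereal s | s. summable (\<lambda>k. Jlen a (Suc k) powr s)}"

definition eta :: "(real \<Rightarrow> real) \<Rightarrow> (real \<Rightarrow> real) \<Rightarrow> nat \<Rightarrow> ereal" where
  "eta a b n = Sup {ereal \<bar>D01 (gcomp a b ms) x\<bar> | ms x.
       length ms = n \<and> (\<forall>m\<in>set ms. 1 \<le> m) \<and> x \<in> {0..1}}"

definition good_class :: "(real \<Rightarrow> real) \<Rightarrow> (real \<Rightarrow> real) \<Rightarrow> bool" where
  "good_class a b \<longleftrightarrow>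
     abscissa_J a < 1 \<and>
     limsup (eta a b) < 1 \<and>
     (\<exists>L\<ge>1. \<forall>m\<ge>1. \<forall>x\<in>{0..1}. \<forall>y\<in>{0..1}.
        inverse L \<le> \<bar>D01 (gblk a b m) x / D01 (gblk a b m) y\<bar> \<and>
        \<bar>D01 (gblk a b m) x / D01 (gblk a b m) y\<bar> \<le> L)"

definition DRBGC :: "real \<Rightarrow> (real \<Rightarrow> real) \<Rightarrow> (real \<Rightarrow> real) \<Rightarrow> bool" where
  "DRBGC c a b \<longleftrightarrow> DRI c a b \<and> good_class a b"

definition SV0star :: "(real \<Rightarrow> real) \<Rightarrow> bool" where
  "SV0star V \<longleftrightarrow>
     (\<forall>x\<in>{0<..1}. V x > 0) \<and> C1_half V \<and>
     (\<forall>t>0. ((\<lambda>x. V (t * x) / V x) \<longlongrightarrow> 1) (at_right 0)) \<and>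
     ((\<lambda>x. x * Dh V x / V x) \<longlongrightarrow> 0) (at_right 0)"

definition DRIS :: "real \<Rightarrow> real \<Rightarrow> (real \<Rightarrow> real) \<Rightarrow> (real \<Rightarrow> real) \<Rightarrow> bool" where
  "DRIS \<gamma> c a b \<longleftrightarrow> DRI c a b \<and>
     (\<exists>u V. (\<forall>x\<in>{0..1}. a x = x - u x) \<and> C2_01 u \<and> u 0 = 0 \<and> D01 u 0 = 0 \<and>
        (\<forall>x\<in>{0..1}. D01 u x \<in> {0..1}) \<and> SV0star V \<and>
        (\<forall>x\<in>{0<..1}. D01 u x = x powr \<gamma> * V x))"

end

(*
  Near the neutral fixed point 0 we have a x = x - u x with u' x = x^\<gamma> V x, and x V'/V \<rightarrow> 0 makes
  V x / x decrease near 0; hence V x \<ge> c x, u x \<ge> k x^n, and the gaps |J_(j+1)| = q_j - q_(j+1)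
  are at least k q_j^n. This makes |J_(j+1)|^(1 - 1/(2n)) dominated by the telescoping series
  of sqrt q_j, so the abscissa of convergence is below 1.
  Away from 0 both branches contract: a' < 1 and |b'| < 1 on the compact [c,1], and in two
  consecutive blocks one of these factors always occurs, so compositions of two blocks contract
  uniformly. Bounded distortion holds because a' is log-Lipschitz and the orbits a^k z, a^k w
  of two points of [c,1] stay in the same interval J_(k+1), whose lengths sum to at most 1.
*)

theory Submission
  imports Defs
begin

definition diff_selfmap01 :: "(real \<Rightarrow> real) \<Rightarrow> bool" where
  "diff_selfmap01 f \<longleftrightarrow> f ` {0..1} \<subseteq> {0..1} \<and>
     (\<forall>x\<in>{0..1}. (f has_vector_derivative D01 f x) (at x within {0..1}))"

lemma D01_eqI:
  assumes "(f has_vector_derivative d) (at x within {0..1})" and "x \<in> {0..1}"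
  shows "D01 f x = d"
  unfolding D01_def using vector_derivative_within_cbox[of 0 1 x f d] assms
  by (simp add: cbox_interval)

lemma D01_id: "x \<in> {0..1} \<Longrightarrow> D01 id x = 1"
  by (rule D01_eqI) (simp_all add: has_vector_derivative_id id_def)

lemma diff_selfmap01_id: "diff_selfmap01 id"
  unfolding diff_selfmap01_def using D01_id by (simp add: has_vector_derivative_id id_def)

lemma diff_selfmap01_comp:
  assumes "diff_selfmap01 f" "diff_selfmap01 g"
  shows "diff_selfmap01 (g \<circ> f)"
    and "x \<in> {0..1} \<Longrightarrow> D01 (g \<circ> f) x = D01 g (f x) * D01 f x"
proof -
  have chain: "((g \<circ> f) has_vector_derivative (D01 g (f x) * D01 f x)) (at x within {0..1})"
    if x: "x \<in> {0..1}" for x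
  proof -
    have "f x \<in> {0..1}" using assms(1) x unfolding diff_selfmap01_def by blast
    then have "(g has_vector_derivative D01 g (f x)) (at (f x) within f ` {0..1})"
      using assms unfolding diff_selfmap01_def by (meson has_vector_derivative_within_subset)
    moreover have "(f has_vector_derivative D01 f x) (at x within {0..1})"
      using assms(1) x unfolding diff_selfmap01_def by blast
    ultimately show ?thesis
      using vector_diff_chain_within by (fastforce simp: mult.commute)
  qed
  show D: "x \<in> {0..1} \<Longrightarrow> D01 (g \<circ> f) x = D01 g (f x) * D01 f x" for x
    using chain D01_eqI by blast
  show "diff_selfmap01 (g \<circ> f)"
    using chain D assms unfolding diff_selfmap01_def image_subset_iff by auto
qed

lemma C2_01_imp_diff_selfmap01:
  assumes "C2_01 f" and "f ` {0..1} \<subseteq> {0..1}"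
  shows "diff_selfmap01 f"
  using assms vector_derivative_works unfolding diff_selfmap01_def C2_01_def D01_def by blast

lemma C2_01_continuous_on: "C2_01 f \<Longrightarrow> continuous_on {0..1} f"
  unfolding C2_01_def
  by (meson continuous_on_eq_continuous_within differentiable_imp_continuous_within)

lemma C2_01_continuous_on_D01: "C2_01 f \<Longrightarrow> continuous_on {0..1} (D01 f)"
  unfolding C2_01_def
  by (meson continuous_on_eq_continuous_within differentiable_imp_continuous_within)

lemma C2_01_has_real_derivative:
  assumes "C2_01 f" and "0 < t" "t < 1"
  shows "(f has_real_derivative D01 f t) (at t)"
proof -
  have "f differentiable (at t within {0..1})"
    using assms unfolding C2_01_def by auto
  then have "(f has_vector_derivative D01 f t) (at t within {0..1})"
    unfolding D01_def using vector_derivative_works by blast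
  then show ?thesis
    using at_within_interior[of t "{0..1::real}"] assms
    by (simp add: has_real_derivative_iff_has_vector_derivative)
qed

lemma continuous_on_compact_less_imp_uniform:
  fixes f :: "'a::topological_space \<Rightarrow> real"
  assumes "compact S" "continuous_on S f" "\<And>x. x \<in> S \<Longrightarrow> f x < B"
  shows "\<exists>r<B. \<forall>x\<in>S. f x \<le> r"
proof (cases "S = {}")
  case True
  then show ?thesis by (intro exI[of _ "B - 1"]) auto
next
  case False
  then obtain x where "x \<in> S" "\<forall>y\<in>S. f y \<le> f x"
    using continuous_attains_sup[OF assms(1) _ assms(2)] by blast
  then show ?thesis using assms(3) by blast
qed

lemma C2_01_D01_lipschitz:
  assumes "C2_01 f"
  shows "\<exists>M. \<forall>p\<in>{0..1}. \<forall>r\<in>{0..1}. \<bar>D01 f p - D01 f r\<bar> \<le> M * \<bar>p - r\<bar>"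
proof -
  let ?f'' = "D01 (D01 f)"
  have "continuous_on {0..1} (\<lambda>x. \<bar>?f'' x\<bar>)"
    using assms unfolding C2_01_def by (intro continuous_intros) auto
  then obtain x0 where bound: "\<forall>y\<in>{0..1}. \<bar>?f'' y\<bar> \<le> \<bar>?f'' x0\<bar>"
    using continuous_attains_sup[of "{0..1::real}" "\<lambda>x. \<bar>?f'' x\<bar>"] by auto
  have deriv: "(D01 f has_derivative (\<lambda>h. h *\<^sub>R ?f'' x)) (at x within {0..1})"
    if "x \<in> {0..1}" for x
    using assms that vector_derivative_works
    unfolding C2_01_def D01_def[of "D01 f"] has_vector_derivative_def by blast
  have onorm: "onorm (\<lambda>h. h *\<^sub>R ?f'' x) = \<bar>?f'' x\<bar>" for x
    using onorm_scaleR_left[OF bounded_linear_ident, of "?f'' x"] by (simp add: onorm_id)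
  have "norm (D01 f p - D01 f r) \<le> \<bar>?f'' x0\<bar> * norm (p - r)"
    if "p \<in> {0..1}" "r \<in> {0..1}" for p r
    using that deriv bound
    by (intro differentiable_bound[of "{0..1}" _ "\<lambda>x h. h *\<^sub>R ?f'' x"])
      (simp_all only: onorm, auto)
  then show ?thesis by (intro exI[of _ "\<bar>?f'' x0\<bar>"]) simp
qed

lemma C2_01_D01_log_lipschitz:
  assumes "C2_01 f" and pos: "\<And>x. x \<in> {0..1} \<Longrightarrow> D01 f x > 0"
  shows "\<exists>K\<ge>0. \<forall>p\<in>{0..1}. \<forall>r\<in>{0..1}. D01 f p \<le> exp (K * \<bar>p - r\<bar>) * D01 f r"
proof -
  obtain M where M: "\<forall>p\<in>{0..1}. \<forall>r\<in>{0..1}. \<bar>D01 f p - D01 f r\<bar> \<le> M * \<bar>p - r\<bar>"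
    using C2_01_D01_lipschitz[OF assms(1)] by blast
  obtain r0 where r0: "r0 < 0" "\<forall>x\<in>{0..1}. - D01 f x \<le> r0"
    using continuous_on_compact_less_imp_uniform[of "{0..1}" "\<lambda>x. - D01 f x" 0]
      C2_01_continuous_on_D01[OF assms(1)] pos by (auto intro: continuous_intros)
  define K where "K = max 0 M / (- r0)"
  have K: "K \<ge> 0" using r0 unfolding K_def by (intro divide_nonneg_pos) auto
  have "D01 f p \<le> exp (K * \<bar>p - r\<bar>) * D01 f r" if p: "p \<in> {0..1}" and r: "r \<in> {0..1}" for p r
  proof -
    have "D01 f p \<le> D01 f r + max 0 M * \<bar>p - r\<bar>"
      using M p r by (smt (verit, best) mult_right_mono abs_ge_zero)
    also have "max 0 M = - r0 * K" using r0 unfolding K_def by simp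
    also have "- r0 * K * \<bar>p - r\<bar> \<le> D01 f r * (K * \<bar>p - r\<bar>)"
    proof -
      have "- r0 \<le> D01 f r" using r0 r by force
      then show ?thesis
        using mult_right_mono[of "- r0" "D01 f r" "K * \<bar>p - r\<bar>"] K by (simp add: mult.assoc)
    qed
    also have "D01 f r + D01 f r * (K * \<bar>p - r\<bar>) = D01 f r * (1 + K * \<bar>p - r\<bar>)"
      by (simp add: algebra_simps)
    also have "\<dots> \<le> D01 f r * exp (K * \<bar>p - r\<bar>)"
      using pos[OF r] by (intro mult_left_mono exp_ge_add_one_self) auto
    finally show ?thesis by (simp add: mult.commute)
  qed
  with K show ?thesis by blast
qed

text \<open>With \<open>e = 1/(2n)\<close> and \<open>D = q j - q (j+1)\<close>: \<open>D powr (1 - e) \<le> k powr -e * D / sqrt (q j)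
  \<le> 2 * k powr -e * (sqrt (q j) - sqrt (q (j+1)))\<close>, which telescopes.\<close>

lemma summable_gaps_powr:
  fixes q :: "nat \<Rightarrow> real"
  assumes pos: "\<And>j. 0 < q j" and "k > 0" "n \<ge> 1"
    and gap: "\<And>j. k * q j ^ n \<le> q j - q (Suc j)"
  shows "summable (\<lambda>j. (q j - q (Suc j)) powr (1 - 1 / (2 * n)))"
proof -
  define e where "e = 1 / (2 * real n)"
  have e: "0 < e" "real n * e = 1 / 2" using assms(3) unfolding e_def by auto
  have dec: "q (Suc j) \<le> q j" for j using gap[of j] pos[of j] \<open>k > 0\<close>
    by (smt (verit) mult_pos_pos zero_less_power)
  have bound: "(q j - q (Suc j)) powr (1 - e) \<le> k powr (- e) * (2 * (sqrt (q j) - sqrt (q (Suc j))))"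
    for j
  proof -
    let ?q = "q j" and ?q' = "q (Suc j)"
    define D where "D = ?q - ?q'"
    have kq: "0 < k * ?q ^ n" using \<open>k > 0\<close> pos by auto
    then have D: "0 < D" using gap[of j] unfolding D_def by linarith
    have "(k * ?q ^ n) powr (- e) = k powr (- e) * (?q powr real n) powr (- e)"
      using \<open>k > 0\<close> pos[of j] by (simp add: powr_mult powr_realpow)
    also have "(?q powr real n) powr (- e) = ?q powr (- (real n * e))"
      by (simp add: powr_powr)
    also have "\<dots> = inverse (sqrt ?q)"
      unfolding e(2) powr_minus using pos[of j] by (simp add: powr_half_sqrt)
    finally have kq_powr: "(k * ?q ^ n) powr (- e) = k powr (- e) * inverse (sqrt ?q)" .
    have "D powr (1 - e) = D * D powr (- e)"
      using D powr_add[of D 1 "- e"] by simp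
    also have "\<dots> \<le> D * (k * ?q ^ n) powr (- e)"
      using powr_mono2'[of "- e" "k * ?q ^ n" D] e kq gap[of j] D unfolding D_def
      by (intro mult_left_mono) auto
    finally have upper: "D powr (1 - e) \<le> k powr (- e) * (D / sqrt ?q)"
      unfolding kq_powr by (simp add: divide_inverse mult_ac)
    have "D = (sqrt ?q - sqrt ?q') * (sqrt ?q + sqrt ?q')"
      using pos[of j] pos[of "Suc j"] unfolding D_def by (simp add: algebra_simps)
    also have "\<dots> \<le> (sqrt ?q - sqrt ?q') * (2 * sqrt ?q)"
      using dec[of j] by (intro mult_left_mono) auto
    finally have "D / sqrt ?q \<le> 2 * (sqrt ?q - sqrt ?q')"
      using pos[of j] by (simp add: divide_le_eq mult_ac)
    then have "k powr (- e) * (D / sqrt ?q) \<le> k powr (- e) * (2 * (sqrt ?q - sqrt ?q'))"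
      by (intro mult_left_mono) auto
    with upper show ?thesis unfolding D_def by (rule order_trans)
  qed
  have "decseq (\<lambda>j. sqrt (q j))" using dec by (intro decseq_SucI) simp
  then obtain L where "(\<lambda>j. sqrt (q j)) \<longlonglongrightarrow> L"
    using decseq_convergent[of "\<lambda>j. sqrt (q j)" 0] by (metis real_sqrt_ge_zero pos less_imp_le)
  then have "summable (\<lambda>j. k powr (- e) * (2 * (sqrt (q j) - sqrt (q (Suc j)))))"
    by (intro summable_mult telescope_summable')
  then have "summable (\<lambda>j. (q j - q (Suc j)) powr (1 - e))"
    by (rule summable_comparison_test'[where N = 0]) (metis bound abs_of_nonneg powr_ge_zero real_norm_def)
  then show ?thesis unfolding e_def .
qed

locale DR_system =
  fixes c :: real and a b :: "real \<Rightarrow> real"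
  assumes DR: "DR c a b"
begin

lemma c_pos: "0 < c" and c_less_1: "c < 1"
  using DR unfolding DR_def binary_system_def by auto

lemma C2_a: "C2_01 a" and C2_b: "C2_01 b"
  using DR unfolding DR_def binary_system_def by auto

lemma a_image: "a ` {0..1} = {0..c}" and b_image: "b ` {0..1} = {c..1}"
  using DR unfolding DR_def binary_system_def bij_betw_def by blast+

lemma a_in: "x \<in> {0..1} \<Longrightarrow> a x \<in> {0..c}"
  and b_in: "x \<in> {0..1} \<Longrightarrow> b x \<in> {c..1}"
  using a_image b_image by blast+

lemma a_in_01: "x \<in> {0..1} \<Longrightarrow> a x \<in> {0..1}"
  using a_in c_less_1 by (meson atLeastAtMost_iff order.trans less_imp_le)

lemma b_in_01: "x \<in> {0..1} \<Longrightarrow> b x \<in> {0..1}"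
  using b_in c_pos by (meson atLeastAtMost_iff order.trans less_imp_le)

lemma diff_selfmap01_a: "diff_selfmap01 a" and diff_selfmap01_b: "diff_selfmap01 b"
  using C2_01_imp_diff_selfmap01 C2_a C2_b a_in_01 b_in_01 by blast+

lemma a_0: "a 0 = 0" and a_1: "a 1 = c"
  using DR unfolding DR_def by auto

lemma a_strict_mono: "strict_mono_on {0..1} a"
  using DR unfolding DR_def by auto

lemma a_mono: "x \<in> {0..1} \<Longrightarrow> y \<in> {0..1} \<Longrightarrow> x \<le> y \<Longrightarrow> a x \<le> a y"
  using a_strict_mono by (metis order_le_less strict_mono_onD)

lemma D01_a_pos: "x \<in> {0..1} \<Longrightarrow> 0 < D01 a x"
  and D01_b_neg: "x \<in> {0..1} \<Longrightarrow> D01 b x < 0"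
  and D01_a_less_1: "x \<in> {0<..1} \<Longrightarrow> D01 a x < 1"
  and D01_b_gt_minus_1: "x \<in> {0<..1} \<Longrightarrow> -1 < D01 b x"
  using DR unfolding DR_def by auto

lemma D01_a_le_1: "x \<in> {0..1} \<Longrightarrow> D01 a x \<le> 1"
  using continuous_le_on_closure[of "{0<..1}" "D01 a" x 1] C2_01_continuous_on_D01[OF C2_a]
  unfolding closure_greaterThanAtMost[OF zero_less_one] using D01_a_less_1 less_imp_le by blast

lemma D01_b_ge_minus_1: "x \<in> {0..1} \<Longrightarrow> -1 \<le> D01 b x"
  using continuous_ge_on_closure[of "{0<..1}" "D01 b" x "-1"] C2_01_continuous_on_D01[OF C2_b]
  unfolding closure_greaterThanAtMost[OF zero_less_one] using D01_b_gt_minus_1 less_imp_le by blast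

lemma abs_D01_b_le_1: "x \<in> {0..1} \<Longrightarrow> \<bar>D01 b x\<bar> \<le> 1"
  using D01_b_ge_minus_1 D01_b_neg by (simp add: abs_if)

lemma diff_selfmap01_funpow_a: "diff_selfmap01 (a ^^ n)"
proof (induction n)
  case 0
  then show ?case unfolding funpow_0 id_def[symmetric] by (rule diff_selfmap01_id)
next
  case (Suc n)
  then show ?case unfolding funpow.simps(2) by (rule diff_selfmap01_comp(1)[OF _ diff_selfmap01_a])
qed

lemma funpow_a_in_01: "x \<in> {0..1} \<Longrightarrow> (a ^^ n) x \<in> {0..1}"
  using diff_selfmap01_funpow_a unfolding diff_selfmap01_def by blast

lemma D01_funpow_a_Suc: "x \<in> {0..1} \<Longrightarrow> D01 (a ^^ Suc n) x = D01 a ((a ^^ n) x) * D01 (a ^^ n) x"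
  unfolding funpow.simps(2) by (rule diff_selfmap01_comp(2)[OF diff_selfmap01_funpow_a diff_selfmap01_a])

lemma D01_funpow_a_Suc': "x \<in> {0..1} \<Longrightarrow> D01 (a ^^ Suc n) x = D01 (a ^^ n) (a x) * D01 a x"
  unfolding funpow_Suc_right by (rule diff_selfmap01_comp(2)[OF diff_selfmap01_a diff_selfmap01_funpow_a])

lemma D01_funpow_a_bounds: "x \<in> {0..1} \<Longrightarrow> 0 < D01 (a ^^ n) x \<and> D01 (a ^^ n) x \<le> 1"
proof (induction n)
  case 0
  then show ?case unfolding funpow_0 id_def[symmetric] using D01_id by simp
next
  case (Suc n)
  have "0 < D01 a ((a ^^ n) x)" "D01 a ((a ^^ n) x) \<le> 1"
    using D01_a_pos D01_a_le_1 funpow_a_in_01 Suc.prems by auto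
  then show ?case unfolding D01_funpow_a_Suc[OF Suc.prems] using Suc by (simp add: mult_le_one)
qed

lemma funpow_a_mono: "x \<in> {0..1} \<Longrightarrow> y \<in> {0..1} \<Longrightarrow> x \<le> y \<Longrightarrow> (a ^^ n) x \<le> (a ^^ n) y"
  by (induction n) (auto intro!: a_mono funpow_a_in_01)

lemma diff_selfmap01_gblk: "diff_selfmap01 (gblk a b m)"
  unfolding gblk_def by (rule diff_selfmap01_comp(1)[OF diff_selfmap01_b diff_selfmap01_funpow_a])

lemma gblk_in_01: "x \<in> {0..1} \<Longrightarrow> gblk a b m x \<in> {0..1}"
  using diff_selfmap01_gblk unfolding diff_selfmap01_def by blast

lemma D01_gblk: "x \<in> {0..1} \<Longrightarrow> D01 (gblk a b m) x = D01 (a ^^ (m - 1)) (b x) * D01 b x"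
  unfolding gblk_def by (rule diff_selfmap01_comp(2)[OF diff_selfmap01_b diff_selfmap01_funpow_a])

lemma D01_gblk_neg:
  assumes "x \<in> {0..1}"
  shows "D01 (gblk a b m) x < 0"
  using D01_funpow_a_bounds[OF b_in_01[OF assms], of "m - 1"] D01_b_neg[OF assms]
  by (simp add: D01_gblk[OF assms] mult_pos_neg)

lemma abs_D01_gblk_le_1:
  assumes "x \<in> {0..1}"
  shows "\<bar>D01 (gblk a b m) x\<bar> \<le> 1"
proof -
  have "\<bar>D01 (a ^^ (m - 1)) (b x)\<bar> \<le> 1"
    using D01_funpow_a_bounds[OF b_in_01[OF assms], of "m - 1"] by simp
  then show ?thesis
    unfolding D01_gblk[OF assms] abs_mult using abs_D01_b_le_1[OF assms] by (simp add: mult_le_one)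
qed

lemma gcomp_Nil: "gcomp a b [] = id"
  and gcomp_Cons: "gcomp a b (m # ms) = gblk a b m \<circ> gcomp a b ms"
  by (simp_all add: gcomp_def)

lemma diff_selfmap01_gcomp: "diff_selfmap01 (gcomp a b ms)"
proof (induction ms)
  case Nil
  then show ?case unfolding gcomp_Nil by (rule diff_selfmap01_id)
next
  case (Cons m ms)
  then show ?case unfolding gcomp_Cons by (rule diff_selfmap01_comp(1)[OF _ diff_selfmap01_gblk])
qed

lemma gcomp_in_01: "x \<in> {0..1} \<Longrightarrow> gcomp a b ms x \<in> {0..1}"
  using diff_selfmap01_gcomp unfolding diff_selfmap01_def by blast

lemma D01_gcomp_Cons: "x \<in> {0..1} \<Longrightarrow>
   D01 (gcomp a b (m # ms)) x = D01 (gblk a b m) (gcomp a b ms x) * D01 (gcomp a b ms) x"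
  unfolding gcomp_Cons by (rule diff_selfmap01_comp(2)[OF diff_selfmap01_gcomp diff_selfmap01_gblk])

lemma abs_D01_gcomp_le_1: "x \<in> {0..1} \<Longrightarrow> \<bar>D01 (gcomp a b ms) x\<bar> \<le> 1"
proof (induction ms)
  case Nil
  then show ?case unfolding gcomp_Nil D01_id[OF Nil] by simp
next
  case (Cons m ms)
  have "\<bar>D01 (gblk a b m) (gcomp a b ms x)\<bar> \<le> 1"
    using abs_D01_gblk_le_1 gcomp_in_01 Cons.prems by blast
  then show ?case
    unfolding D01_gcomp_Cons[OF Cons.prems] abs_mult using Cons by (simp add: mult_le_one)
qed

lemma abs_D01_gblk_le_on_c1: "\<exists>\<beta><1. \<forall>m. \<forall>z\<in>{c..1}. \<bar>D01 (gblk a b m) z\<bar> \<le> \<beta>"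
proof -
  have c1: "{c..1} \<subseteq> {0..1}" using c_pos by auto
  obtain \<beta> where \<beta>: "\<beta> < 1" "\<forall>y\<in>{c..1}. - D01 b y \<le> \<beta>"
    using continuous_on_compact_less_imp_uniform[of "{c..1}" "\<lambda>y. - D01 b y" 1]
      continuous_on_minus[OF continuous_on_subset[OF C2_01_continuous_on_D01[OF C2_b] c1]]
      D01_b_gt_minus_1 c_pos by fastforce
  have "\<bar>D01 (gblk a b m) z\<bar> \<le> \<beta>" if z: "z \<in> {c..1}" for m z
  proof -
    have "\<bar>D01 (a ^^ (m - 1)) (b z)\<bar> \<le> 1"
      using D01_funpow_a_bounds[OF b_in_01, of z "m - 1"] z c1 by auto
    moreover have "\<bar>D01 b z\<bar> \<le> \<beta>" using \<beta> z D01_b_neg[of z] c1 by auto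
    ultimately have "\<bar>D01 (a ^^ (m - 1)) (b z)\<bar> * \<bar>D01 b z\<bar> \<le> 1 * \<beta>"
      by (intro mult_mono) auto
    then show ?thesis unfolding D01_gblk[OF subsetD[OF c1 z]] abs_mult by simp
  qed
  with \<beta> show ?thesis by blast
qed

lemma abs_D01_gblk_le_if_ge_2: "\<exists>\<rho><1. \<forall>m\<ge>2. \<forall>y\<in>{0..1}. \<bar>D01 (gblk a b m) y\<bar> \<le> \<rho>"
proof -
  have c1: "{c..1} \<subseteq> {0..1}" using c_pos by auto
  obtain \<rho> where \<rho>: "\<rho> < 1" "\<forall>y\<in>{c..1}. D01 a y \<le> \<rho>"
    using continuous_on_compact_less_imp_uniform[of "{c..1}" "D01 a" 1]
      continuous_on_subset[OF C2_01_continuous_on_D01[OF C2_a] c1] D01_a_less_1 c_pos by auto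
  have "\<bar>D01 (gblk a b m) y\<bar> \<le> \<rho>" if y: "y \<in> {0..1}" and m: "2 \<le> m" for m y
  proof -
    obtain k where k: "m - 1 = Suc k" using m by (cases "m - 1") auto
    have "D01 (a ^^ k) (a (b y)) \<le> 1" "0 < D01 (a ^^ k) (a (b y))"
      using D01_funpow_a_bounds a_in_01 b_in_01 y by auto
    moreover have "0 < D01 a (b y)" "D01 a (b y) \<le> \<rho>"
      using D01_a_pos b_in_01 b_in \<rho> y by auto
    ultimately have "D01 (a ^^ k) (a (b y)) * D01 a (b y) \<le> 1 * \<rho>"
      by (intro mult_mono) auto
    then have "\<bar>D01 (a ^^ (m - 1)) (b y)\<bar> \<le> \<rho>"
      unfolding k D01_funpow_a_Suc'[OF b_in_01[OF y]] using \<open>0 < D01 (a ^^ k) _\<close> \<open>0 < D01 a _\<close>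
      by simp
    then have "\<bar>D01 (a ^^ (m - 1)) (b y)\<bar> * \<bar>D01 b y\<bar> \<le> \<rho> * 1"
      using abs_D01_b_le_1[OF y] by (intro mult_mono) auto
    then show ?thesis unfolding D01_gblk[OF y] abs_mult by simp
  qed
  with \<rho> show ?thesis by blast
qed

text \<open>Either the inner block is \<open>g\<^sub>1 = b\<close>, which maps into \<open>[c,1]\<close> where \<open>|b'| < 1\<close>, or it ends
  with \<open>a\<close> applied on \<open>b [0,1] = [c,1]\<close>, where \<open>a' < 1\<close>.\<close>

lemma gblk_pair_contraction:
  "\<exists>\<theta><1. \<forall>m1\<ge>1. \<forall>m2\<ge>1. \<forall>y\<in>{0..1}.
     \<bar>D01 (gblk a b m1) (gblk a b m2 y)\<bar> * \<bar>D01 (gblk a b m2) y\<bar> \<le> \<theta>"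
proof -
  obtain \<beta> where \<beta>: "\<beta> < 1" "\<forall>m. \<forall>z\<in>{c..1}. \<bar>D01 (gblk a b m) z\<bar> \<le> \<beta>"
    using abs_D01_gblk_le_on_c1 by blast
  obtain \<rho> where \<rho>: "\<rho> < 1" "\<forall>m\<ge>2. \<forall>y\<in>{0..1}. \<bar>D01 (gblk a b m) y\<bar> \<le> \<rho>"
    using abs_D01_gblk_le_if_ge_2 by blast
  have "\<bar>D01 (gblk a b m1) (gblk a b m2 y)\<bar> * \<bar>D01 (gblk a b m2) y\<bar> \<le> max \<rho> \<beta>"
    if "1 \<le> m2" "y \<in> {0..1}" for m1 m2 y
  proof (cases "m2 = 1")
    case True
    then have "gblk a b m2 y = b y" by (simp add: gblk_def)
    then have "\<bar>D01 (gblk a b m1) (gblk a b m2 y)\<bar> \<le> \<beta>" using \<beta> b_in that by auto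
    moreover have "0 \<le> \<beta>" using calculation by linarith
    ultimately have "\<bar>D01 (gblk a b m1) (gblk a b m2 y)\<bar> * \<bar>D01 (gblk a b m2) y\<bar> \<le> \<beta> * 1"
      using abs_D01_gblk_le_1[of y m2] that by (intro mult_mono) auto
    then show ?thesis by linarith
  next
    case False
    then have "\<bar>D01 (gblk a b m2) y\<bar> \<le> \<rho>" using \<rho> that by auto
    then have "\<bar>D01 (gblk a b m1) (gblk a b m2 y)\<bar> * \<bar>D01 (gblk a b m2) y\<bar> \<le> 1 * \<rho>"
      using abs_D01_gblk_le_1[OF gblk_in_01[of y m2], of m1] that by (intro mult_mono) auto
    then show ?thesis by linarith
  qed
  then show ?thesis using \<rho> \<beta> by (intro exI[of _ "max \<rho> \<beta>"]) auto
qed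

lemma eta_le:
  assumes "2 \<le> n"
    and pair: "\<forall>m1\<ge>1. \<forall>m2\<ge>1. \<forall>y\<in>{0..1}.
       \<bar>D01 (gblk a b m1) (gblk a b m2 y)\<bar> * \<bar>D01 (gblk a b m2) y\<bar> \<le> \<theta>"
  shows "eta a b n \<le> ereal \<theta>"
  unfolding eta_def
proof (rule Sup_least)
  fix z
  assume "z \<in> {ereal \<bar>D01 (gcomp a b ms) x\<bar> | ms x.
    length ms = n \<and> (\<forall>m\<in>set ms. 1 \<le> m) \<and> x \<in> {0..1}}"
  then obtain ms x where z: "z = ereal \<bar>D01 (gcomp a b ms) x\<bar>" and len: "length ms = n"
    and ms1: "\<forall>m\<in>set ms. 1 \<le> m" and x: "x \<in> {0..1}"
    by blast
  obtain m1 m2 rest where ms: "ms = m1 # m2 # rest"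
    using len assms(1) by (cases ms; cases "tl ms") auto
  define y where "y = gcomp a b rest x"
  have y: "y \<in> {0..1}" using gcomp_in_01 x y_def by auto
  have eq: "D01 (gcomp a b ms) x
      = (D01 (gblk a b m1) (gblk a b m2 y) * D01 (gblk a b m2) y) * D01 (gcomp a b rest) x"
    unfolding ms D01_gcomp_Cons[OF x] D01_gcomp_Cons[OF x, of m2 rest] y_def
    by (simp add: gcomp_Cons)
  have head: "\<bar>D01 (gblk a b m1) (gblk a b m2 y)\<bar> * \<bar>D01 (gblk a b m2) y\<bar> \<le> \<theta>"
    using pair y ms1 ms by auto
  moreover have "\<bar>D01 (gcomp a b rest) x\<bar> \<le> 1" using abs_D01_gcomp_le_1 x by auto
  moreover have "0 \<le> \<theta>" using head by (meson abs_ge_zero mult_nonneg_nonneg order_trans)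
  ultimately have "\<bar>D01 (gcomp a b ms) x\<bar> \<le> \<theta> * 1"
    unfolding eq abs_mult by (intro mult_mono) auto
  then show "z \<le> ereal \<theta>" using z by simp
qed

lemma limsup_eta_less_1: "limsup (eta a b) < 1"
proof -
  obtain \<theta> where \<theta>: "\<theta> < 1" and pair: "\<forall>m1\<ge>1. \<forall>m2\<ge>1. \<forall>y\<in>{0..1}.
       \<bar>D01 (gblk a b m1) (gblk a b m2 y)\<bar> * \<bar>D01 (gblk a b m2) y\<bar> \<le> \<theta>"
    using gblk_pair_contraction by blast
  have "eventually (\<lambda>n. eta a b n \<le> ereal \<theta>) sequentially"
    unfolding eventually_sequentially using eta_le[OF _ pair] by blast
  then have "limsup (eta a b) \<le> ereal \<theta>" by (rule Limsup_bounded)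
  then show ?thesis using \<theta> by (simp add: le_less_trans)
qed

lemma qpt_Suc: "qpt a (Suc n) = a (qpt a n)"
  by (simp add: qpt_def)

lemma qpt_in_01: "qpt a n \<in> {0..1}"
  unfolding qpt_def using funpow_a_in_01[of 1 n] by simp

lemma funpow_a_c: "(a ^^ n) c = qpt a (Suc n)"
  unfolding qpt_def funpow_Suc_right by (simp add: a_1)

lemma funpow_a_c1_in_J: "z \<in> {c..1} \<Longrightarrow> (a ^^ n) z \<in> {qpt a (Suc n)..qpt a n}"
  using funpow_a_mono[of c z n] funpow_a_mono[of z 1 n] c_pos
  by (auto simp: funpow_a_c qpt_def)

lemma qpt_pos: "0 < qpt a n"
proof (induction n)
  case (Suc n)
  then have "a 0 < a (qpt a n)"
    using qpt_in_01 by (intro strict_mono_onD[OF a_strict_mono]) auto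
  then show ?case by (simp add: qpt_Suc a_0)
qed (simp add: qpt_def)

lemma D01_funpow_a_ratio_le_exp:
  assumes K: "K \<ge> 0"
    and logLip: "\<forall>p\<in>{0..1}. \<forall>r\<in>{0..1}. D01 a p \<le> exp (K * \<bar>p - r\<bar>) * D01 a r"
    and zw: "z \<in> {c..1}" "w \<in> {c..1}"
  shows "D01 (a ^^ n) z \<le> exp (K * (1 - qpt a n)) * D01 (a ^^ n) w"
proof (induction n)
  case 0
  have "z \<in> {0..1}" "w \<in> {0..1}" using zw c_pos by auto
  then show ?case by (simp add: qpt_def D01_id flip: id_def)
next
  case (Suc n)
  have z: "z \<in> {0..1}" and w: "w \<in> {0..1}" using zw c_pos by auto
  let ?zn = "(a ^^ n) z" and ?wn = "(a ^^ n) w" and ?d = "qpt a n - qpt a (Suc n)"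
  have "\<bar>?zn - ?wn\<bar> \<le> ?d"
    using funpow_a_c1_in_J[OF zw(1), of n] funpow_a_c1_in_J[OF zw(2), of n] by auto
  then have "exp (K * \<bar>?zn - ?wn\<bar>) \<le> exp (K * ?d)" using K by (simp add: mult_left_mono)
  then have "D01 a ?zn \<le> exp (K * ?d) * D01 a ?wn"
    using logLip funpow_a_in_01[OF z] funpow_a_in_01[OF w] D01_a_pos[OF funpow_a_in_01[OF w]]
    by (meson less_imp_le mult_right_mono order_trans)
  moreover have "0 < D01 a ?wn" using D01_a_pos[OF funpow_a_in_01[OF w]] .
  ultimately have "D01 a ?zn * D01 (a ^^ n) z
      \<le> (exp (K * ?d) * D01 a ?wn) * (exp (K * (1 - qpt a n)) * D01 (a ^^ n) w)"
    using Suc.IH D01_a_pos[OF funpow_a_in_01[OF z]] D01_funpow_a_bounds[OF z, of n]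
    by (intro mult_mono) auto
  also have "\<dots> = exp (K * (1 - qpt a (Suc n))) * (D01 a ?wn * D01 (a ^^ n) w)"
    by (simp add: algebra_simps flip: exp_add)
  finally show ?case unfolding D01_funpow_a_Suc[OF z] D01_funpow_a_Suc[OF w] .
qed

lemma funpow_a_bounded_distortion:
  "\<exists>C. \<forall>n. \<forall>z\<in>{c..1}. \<forall>w\<in>{c..1}. D01 (a ^^ n) z \<le> C * D01 (a ^^ n) w"
proof -
  obtain K where K: "K \<ge> 0"
    and logLip: "\<forall>p\<in>{0..1}. \<forall>r\<in>{0..1}. D01 a p \<le> exp (K * \<bar>p - r\<bar>) * D01 a r"
    using C2_01_D01_log_lipschitz[OF C2_a D01_a_pos] by blast
  have "D01 (a ^^ n) z \<le> exp K * D01 (a ^^ n) w" if zw: "z \<in> {c..1}" "w \<in> {c..1}" for n z w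
  proof -
    have "exp (K * (1 - qpt a n)) \<le> exp K" using qpt_in_01[of n] K by (simp add: mult_left_le)
    moreover have "0 < D01 (a ^^ n) w" using D01_funpow_a_bounds zw c_pos by auto
    ultimately show ?thesis
      using D01_funpow_a_ratio_le_exp[OF K logLip zw, of n]
      by (meson less_imp_le mult_right_mono order_trans)
  qed
  then show ?thesis by blast
qed

lemma gblk_bounded_distortion:
  "\<exists>L\<ge>1. \<forall>m\<ge>1. \<forall>x\<in>{0..1}. \<forall>y\<in>{0..1}.
     inverse L \<le> \<bar>D01 (gblk a b m) x / D01 (gblk a b m) y\<bar> \<and>
     \<bar>D01 (gblk a b m) x / D01 (gblk a b m) y\<bar> \<le> L"
proof -
  obtain C where C: "\<forall>n. \<forall>z\<in>{c..1}. \<forall>w\<in>{c..1}. D01 (a ^^ n) z \<le> C * D01 (a ^^ n) w"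
    using funpow_a_bounded_distortion by blast
  obtain r where r: "r < 0" "\<forall>x\<in>{0..1}. D01 b x \<le> r"
    using continuous_on_compact_less_imp_uniform[OF compact_Icc
        C2_01_continuous_on_D01[OF C2_b] D01_b_neg] by blast
  define L where "L = max 1 (C / - r)"
  have upper: "\<bar>D01 (gblk a b m) x / D01 (gblk a b m) y\<bar> \<le> L"
    if x: "x \<in> {0..1}" and y: "y \<in> {0..1}" for m x y
  proof -
    let ?P = "D01 (a ^^ (m - 1))"
    have Py: "0 < ?P (b y)" using D01_funpow_a_bounds b_in_01 y by auto
    have Px: "0 \<le> ?P (b x)" using D01_funpow_a_bounds b_in_01 x by (simp add: less_imp_le)
    have P: "?P (b x) / ?P (b y) \<le> C" using C b_in x y Py by (simp add: divide_le_eq)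
    have "\<bar>D01 b x\<bar> / \<bar>D01 b y\<bar> \<le> 1 / - r"
      using abs_D01_b_le_1[OF x] r y D01_b_neg[OF y] by (intro frac_le) auto
    with P Px Py have "?P (b x) / ?P (b y) * (\<bar>D01 b x\<bar> / \<bar>D01 b y\<bar>) \<le> C * (1 / - r)"
      by (intro mult_mono) (auto intro: order_trans[OF _ P])
    also have "\<dots> \<le> L" unfolding L_def by simp
    finally show ?thesis
      unfolding D01_gblk[OF x] D01_gblk[OF y] using Px Py by (simp add: abs_mult)
  qed
  have "inverse L \<le> \<bar>D01 (gblk a b m) x / D01 (gblk a b m) y\<bar>"
    if x: "x \<in> {0..1}" and y: "y \<in> {0..1}" for m x y
  proof -
    have "D01 (gblk a b m) x \<noteq> 0" "D01 (gblk a b m) y \<noteq> 0"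
      using D01_gblk_neg x y by (simp_all add: less_imp_neq)
    then show ?thesis
      using le_imp_inverse_le[OF upper[OF y x, of m]] by simp
  qed
  with upper show ?thesis by (intro exI[of _ L]) (auto simp: L_def)
qed

lemma abscissa_J_less_1:
  assumes "k > 0" "n \<ge> 1" and contact: "\<And>x. x \<in> {0..1} \<Longrightarrow> k * x ^ n \<le> x - a x"
  shows "abscissa_J a < 1"
proof -
  have "summable (\<lambda>j. Jlen a (Suc j) powr (1 - 1 / (2 * n)))"
    using summable_gaps_powr[of "qpt a" k n] qpt_pos contact[OF qpt_in_01] assms(1,2)
    by (simp add: Jlen_def qpt_Suc)
  then have "abscissa_J a \<le> ereal (1 - 1 / (2 * n))"
    unfolding abscissa_J_def by (intro Inf_lower) blast
  also have "\<dots> < 1" using assms(2) by simp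
  finally show ?thesis .
qed

end

lemma SV0star_has_real_derivative:
  assumes "SV0star V" "0 < t" "t < 1"
  shows "(V has_real_derivative Dh V t) (at t)"
proof -
  have "V differentiable (at t within {0<..1})"
    using assms unfolding SV0star_def C1_half_def by auto
  then have "(V has_vector_derivative Dh V t) (at t within {0<..1})"
    unfolding Dh_def using vector_derivative_works by blast
  then show ?thesis
    using at_within_interior[of t "{0<..1::real}"] assms
    by (simp add: has_real_derivative_iff_has_vector_derivative)
qed

lemma SV0star_continuous_on: "SV0star V \<Longrightarrow> continuous_on {0<..1} V"
  unfolding SV0star_def C1_half_def
  by (meson continuous_on_eq_continuous_within differentiable_imp_continuous_within)

text \<open>Once \<open>x V'(x) / V(x) < 1\<close>, the derivative \<open>(x V'(x) - V(x)) / x\<^sup>2\<close> of \<open>V(x)/x\<close> is negative.\<close>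

lemma SV0star_div_decreasing_near_0:
  assumes "SV0star V"
  shows "\<exists>\<delta>. 0 < \<delta> \<and> \<delta> < 1 \<and> (\<forall>x\<in>{0<..\<delta>}. V \<delta> / \<delta> \<le> V x / x)"
proof -
  have "((\<lambda>x. x * Dh V x / V x) \<longlongrightarrow> 0) (at_right 0)"
    using assms unfolding SV0star_def by auto
  then have "eventually (\<lambda>x. x * Dh V x / V x < 1) (at_right 0)"
    by (rule order_tendstoD(2)) simp
  then obtain d where d: "d > 0" "\<And>t. 0 < t \<Longrightarrow> t < d \<Longrightarrow> t * Dh V t / V t < 1"
    unfolding eventually_at_right_field by auto
  define \<delta> where "\<delta> = min (d / 2) (1 / 2)"
  have \<delta>: "0 < \<delta>" "\<delta> < d" "\<delta> < 1" using d unfolding \<delta>_def by auto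
  have "V \<delta> / \<delta> \<le> V x / x" if x: "0 < x" "x \<le> \<delta>" for x
  proof (rule DERIV_nonpos_imp_decreasing_open[OF x(2)])
    fix t assume t: "x < t" "t < \<delta>"
    then have t01: "0 < t" "t < 1" using x \<delta> by auto
    have Vt: "V t > 0" using assms t01 unfolding SV0star_def by auto
    have "t * Dh V t / V t < 1" using d t \<delta> x by auto
    then have "(Dh V t * t - V t * 1) / (t * t) \<le> 0"
      using Vt t01 by (simp add: divide_less_eq divide_nonpos_pos mult.commute)
    moreover have "((\<lambda>s. V s / s) has_real_derivative (Dh V t * t - V t * 1) / (t * t)) (at t)"
      using DERIV_divide[OF SV0star_has_real_derivative[OF assms t01] DERIV_ident] t01 by simp
    ultimately show "\<exists>y. ((\<lambda>s. V s / s) has_real_derivative y) (at t) \<and> y \<le> 0" by blast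
  next
    show "continuous_on {x..\<delta>} (\<lambda>s. V s / s)"
      using x \<delta> by (intro continuous_intros continuous_on_subset[OF SV0star_continuous_on[OF assms]]) auto
  qed
  with \<delta> show ?thesis by auto
qed

lemma SV0star_ge_linear:
  assumes "SV0star V"
  shows "\<exists>c>0. \<forall>x\<in>{0<..1}. c * x \<le> V x"
proof -
  obtain \<delta> where \<delta>: "0 < \<delta>" "\<delta> < 1" and near_0: "\<forall>x\<in>{0<..\<delta>}. V \<delta> / \<delta> \<le> V x / x"
    using SV0star_div_decreasing_near_0[OF assms] by blast
  have pos: "x \<in> {0<..1} \<Longrightarrow> V x > 0" for x using assms unfolding SV0star_def by auto
  have "continuous_on {\<delta>..1} V"
    using \<delta> by (intro continuous_on_subset[OF SV0star_continuous_on[OF assms]]) auto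
  then obtain xm where xm: "xm \<in> {\<delta>..1}" "\<forall>y\<in>{\<delta>..1}. V xm \<le> V y"
    using continuous_attains_inf[of "{\<delta>..1}" V] \<delta> by auto
  define c where "c = min (V \<delta> / \<delta>) (V xm)"
  have "c > 0" using pos xm \<delta> unfolding c_def by auto
  moreover have "c * x \<le> V x" if x: "x \<in> {0<..1}" for x
  proof (cases "x \<le> \<delta>")
    case True
    then have "c \<le> V x / x" using near_0 x unfolding c_def by (meson greaterThanAtMost_iff min.coboundedI1 order_trans)
    then show ?thesis using x by (simp add: le_divide_eq)
  next
    case False
    then have "c \<le> V x" using xm x unfolding c_def by (meson atLeastAtMost_iff greaterThanAtMost_iff linorder_not_le min.coboundedI2 order_trans less_imp_le)
    moreover have "c * x \<le> c" using x \<open>c > 0\<close> by (simp add: mult_left_le)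
    ultimately show ?thesis by linarith
  qed
  ultimately show ?thesis by blast
qed

lemma C2_01_ge_power_of_D01_ge_power:
  assumes "C2_01 u" "u 0 = 0" and D01_ge: "\<And>t. t \<in> {0<..1} \<Longrightarrow> k * t ^ n \<le> D01 u t"
    and x: "x \<in> {0..1}"
  shows "k / Suc n * x ^ Suc n \<le> u x"
proof -
  let ?h = "\<lambda>t. u t - k / Suc n * t ^ Suc n"
  have "?h 0 \<le> ?h x"
  proof (rule DERIV_nonneg_imp_increasing_open[of 0 x ?h])
    fix t :: real assume t: "0 < t" "t < x"
    have "((\<lambda>t. t ^ Suc n) has_real_derivative Suc n * t ^ n) (at t)"
      using DERIV_pow[of "Suc n" t] by simp
    then have "(?h has_real_derivative D01 u t - k / Suc n * (Suc n * t ^ n)) (at t)"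
      using t x by (intro DERIV_diff DERIV_cmult C2_01_has_real_derivative[OF assms(1)]) auto
    moreover have "0 \<le> D01 u t - k / Suc n * (Suc n * t ^ n)"
      using D01_ge[of t] t x by simp
    ultimately show "\<exists>y. (?h has_real_derivative y) (at t) \<and> 0 \<le> y" by blast
  qed (use x in \<open>auto intro!: continuous_intros continuous_on_subset[OF C2_01_continuous_on[OF assms(1)]]\<close>)
  then show ?thesis using assms(2) by simp
qed

lemma DRIS_power_contact:
  assumes "DRIS \<gamma> c a b"
  shows "\<exists>k>0. \<exists>n\<ge>1. \<forall>x\<in>{0..1}. k * x ^ n \<le> x - a x"
proof -
  obtain u V where a_u: "\<forall>x\<in>{0..1}. a x = x - u x" and u: "C2_01 u" "u 0 = 0"
    and V: "SV0star V" and D01_u: "\<forall>x\<in>{0<..1}. D01 u x = x powr \<gamma> * V x"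
    using assms unfolding DRIS_def by blast
  obtain k where k: "k > 0" "\<forall>x\<in>{0<..1}. k * x \<le> V x" using SV0star_ge_linear[OF V] by blast
  define N where "N = nat \<lceil>\<gamma>\<rceil> + 1"
  have "k * t ^ N \<le> D01 u t" if t: "t \<in> {0<..1}" for t
  proof -
    have "t ^ N = t powr N" using t by (simp add: powr_realpow)
    also have "\<dots> \<le> t powr (\<gamma> + 1)"
    proof -
      have "\<gamma> + 1 \<le> real N" unfolding N_def by linarith
      then show ?thesis using powr_mono'[of "\<gamma> + 1" "real N" t] t by simp
    qed
    also have "\<dots> = t powr \<gamma> * t" using t by (simp add: powr_add)
    finally have "k * t ^ N \<le> t powr \<gamma> * (k * t)" using k by (simp add: mult_left_mono algebra_simps)
    also have "\<dots> \<le> t powr \<gamma> * V t" using k t by (intro mult_left_mono) auto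
    finally show ?thesis using D01_u t by simp
  qed
  then have "k / Suc N * x ^ Suc N \<le> x - a x" if "x \<in> {0..1}" for x
    using C2_01_ge_power_of_D01_ge_power[OF u] a_u that by simp
  with k show ?thesis by (intro exI[of _ "k / Suc N"] conjI exI[of _ "Suc N"]) auto
qed

theorem theorem7p1:
  fixes \<gamma> c :: real and a b :: "real \<Rightarrow> real"
  assumes "\<gamma> > 0" and "DRIS \<gamma> c a b"
  shows "good_class a b \<and> DRBGC c a b"
proof -
  have DRI: "DRI c a b" using assms(2) unfolding DRIS_def by blast
  interpret DR_system c a b by unfold_locales (rule DRI[unfolded DRI_def, THEN conjunct1])
  obtain k n where "k > 0" "n \<ge> 1" "\<forall>x\<in>{0..1}. k * x ^ n \<le> x - a x"
    using DRIS_power_contact[OF assms(2)] by blast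
  then have "good_class a b"
    unfolding good_class_def
    using abscissa_J_less_1 limsup_eta_less_1 gblk_bounded_distortion by blast
  with DRI show ?thesis unfolding DRBGC_def by blast
qed

end
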